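(* Let $G$ be a simple, undirected, unweighted, locally finite graph and $i\sim j$ an edge with $d_i\le d_j$. Then $\mathrm{Ric}(i,j)\ge\Phi(i,j)$, where $$\Phi(i,j)=-\Big(1-\frac1{d_i}-\frac1{d_j}-\frac{|\sharp_\Delta|}{d_j}\Big)_+-\Big(1-\frac1{d_i}-\frac1{d_j}-\frac{|\sharp_\Delta|}{d_i}\Big)_++\frac{|\sharp_\Delta|}{d_j}.$$
   Context: $x_+=\max\{x,0\}$. For an edge $i\sim j$ with degrees $d_i,d_j$ and neighbour sets $S_1(\cdot)$: $\sharp_\Delta=S_1(i)\cap S_1(j)$; $\sharp_\square^i=\{k\in S_1(i)\setminus (S_1(j)\cup\{j\}) : \exists\, w\in (S_1(k)\cap S_1(j))\setminus (S_1(i)\cup\{i\})\}$, $\sharp_\square^j$ symmetric; $\gamma_{\max}=\max\big\{\max_{k\in\sharp_\square^i}|(S_1(k)\cap S_1(j))\setminus(S_1(i)\cup\{i\})|,\ \max_{w\in\sharp_\square^j}|(S_1(w)\cap S_1(i))\setminus(S_1(j)\cup\{j\})|\big\}$. Balanced Forman curvature: $\mathrm{Ric}(i,j)=0$ if $\min\{d_i,d_j\}=1$, otherwise $\mathrm{Ric}(i,j)=\frac{2}{d_i}+\frac{2}{d_j}-2+\frac{2|\sharp_\Delta|}{\max\{d_i,d_j\}}+\frac{|\sharp_\Delta|}{\min\{d_i,d_j\}}+\frac{\gamma_{\max}^{-1}}{\max\{d_i,d_j\}}(|\sharp_\square^i|+|\sharp_\square^j|)$, the last term being $0$ when $\sharp_\square^i=\emptyset$.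 *)

theory Defs
  imports Complex_Main
begin

definition simple_graph :: "('a \<Rightarrow> 'a \<Rightarrow> bool) \<Rightarrow> bool" where
  "simple_graph E \<longleftrightarrow> (\<forall>x y. E x y \<longrightarrow> E y x) \<and> (\<forall>x. \<not> E x x)"

definition S1 :: "('a \<Rightarrow> 'a \<Rightarrow> bool) \<Rightarrow> 'a \<Rightarrow> 'a set" where
  "S1 E x = {y. E x y}"

definition locally_finite :: "('a \<Rightarrow> 'a \<Rightarrow> bool) \<Rightarrow> bool" where
  "locally_finite E \<longleftrightarrow> (\<forall>x. finite (S1 E x))"

definition deg :: "('a \<Rightarrow> 'a \<Rightarrow> bool) \<Rightarrow> 'a \<Rightarrow> nat" where
  "deg E x = card (S1 E x)"

definition tri :: "('a \<Rightarrow> 'a \<Rightarrow> bool) \<Rightarrow> 'a \<Rightarrow> 'a \<Rightarrow> 'a set" where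
  "tri E i j = S1 E i \<inter> S1 E j"

definition sqw :: "('a \<Rightarrow> 'a \<Rightarrow> bool) \<Rightarrow> 'a \<Rightarrow> 'a \<Rightarrow> 'a \<Rightarrow> 'a set" where
  "sqw E i j k = (S1 E k \<inter> S1 E j) - (S1 E i \<union> {i})"

definition sq :: "('a \<Rightarrow> 'a \<Rightarrow> bool) \<Rightarrow> 'a \<Rightarrow> 'a \<Rightarrow> 'a set" where
  "sq E i j = {k \<in> S1 E i - (S1 E j \<union> {j}). sqw E i j k \<noteq> {}}"

text \<open>gamma_max; the 0 inserted only serves to make Max well defined when both
  square sets are empty (in which case the square term is 0 anyway).\<close>
definition gamma_max :: "('a \<Rightarrow> 'a \<Rightarrow> bool) \<Rightarrow> 'a \<Rightarrow> 'a \<Rightarrow> nat" where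
  "gamma_max E i j = Max (insert 0 ((\<lambda>k. card (sqw E i j k)) ` sq E i j
                                 \<union> (\<lambda>w. card (sqw E j i w)) ` sq E j i))"

definition pos_part :: "real \<Rightarrow> real" where
  "pos_part x = max x 0"

definition Ric :: "('a \<Rightarrow> 'a \<Rightarrow> bool) \<Rightarrow> 'a \<Rightarrow> 'a \<Rightarrow> real" where
  "Ric E i j =
    (let di = real (deg E i); dj = real (deg E j); t = real (card (tri E i j));
         M = max di dj; m = min di dj
     in if m = 1 then 0
        else 2 / di + 2 / dj - 2 + 2 * t / M + t / m
             + (if sq E i j = {} then 0
                else (1 / real (gamma_max E i j)) / M
                     * (real (card (sq E i j)) + real (card (sq E j i)))))"

definition Phi :: "('a \<Rightarrow> 'a \<Rightarrow> bool) \<Rightarrow> 'a \<Rightarrow> 'a \<Rightarrow> real" where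
  "Phi E i j =
    (let di = real (deg E i); dj = real (deg E j); t = real (card (tri E i j))
     in - pos_part (1 - 1 / di - 1 / dj - t / dj)
        - pos_part (1 - 1 / di - 1 / dj - t / di) + t / dj)"

end

theory Submission
  imports Defs
begin

text \<open>Replacing each positive part in \<open>\<Phi>\<close> by its argument turns \<open>\<Phi>\<close> into exactly the
  triangle part of the Balanced Forman curvature (for \<open>d\<^sub>i \<le> d\<^sub>j\<close>), and the 4-cycle term
  of \<open>Ric\<close> is nonnegative. In the degenerate case \<open>d\<^sub>i = 1\<close> the only neighbour of \<open>i\<close> is \<open>j\<close>,
  so there are no triangles and both sides vanish.\<close>

lemma pos_part_ge: "x \<le> pos_part x"
  by (simp add: pos_part_def)

lemma pos_part_eq_0: "x \<le> 0 \<Longrightarrow> pos_part x = 0"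
  by (simp add: pos_part_def)

lemma deg_ge_1_if_edge:
  assumes "locally_finite E" and "E i j"
  shows "deg E i \<ge> 1"
proof -
  have "finite (S1 E i)" "j \<in> S1 E i"
    using assms by (simp_all add: locally_finite_def S1_def)
  then show ?thesis
    unfolding deg_def by (metis One_nat_def Suc_leI card_gt_0_iff empty_iff)
qed

lemma tri_empty_if_deg_1:
  assumes "simple_graph E" and "E i j" and "deg E i = 1"
  shows "tri E i j = {}"
proof -
  obtain x where "S1 E i = {x}"
    using assms(3) unfolding deg_def by (metis card_1_singletonE)
  moreover have "j \<in> S1 E i" using assms(2) by (simp add: S1_def)
  ultimately have "S1 E i = {j}" by simp
  moreover have "\<not> E j j" using assms(1) by (simp add: simple_graph_def)
  ultimately show ?thesis by (auto simp: tri_def S1_def)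
qed

lemma Ric_ge_triangle_part:
  fixes E :: "'a \<Rightarrow> 'a \<Rightarrow> bool" and i j :: 'a
  defines "di \<equiv> real (deg E i)" and "dj \<equiv> real (deg E j)"
    and "t \<equiv> real (card (tri E i j))"
  assumes "min di dj \<noteq> 1" and "min di dj > 0"
  shows "Ric E i j \<ge> 2 / di + 2 / dj - 2 + 2 * t / max di dj + t / min di dj"
proof -
  have "max di dj > 0" using assms(5) by linarith
  then have "0 \<le> (if sq E i j = {} then 0
                else (1 / real (gamma_max E i j)) / max di dj
                     * (real (card (sq E i j)) + real (card (sq E j i))))"
    by simp
  with assms(4) show ?thesis
    unfolding Ric_def di_def dj_def t_def Let_def by simp
qed

lemma Phi_le_triangle_part:
  fixes E :: "'a \<Rightarrow> 'a \<Rightarrow> bool" and i j :: 'a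
  defines "di \<equiv> real (deg E i)" and "dj \<equiv> real (deg E j)"
    and "t \<equiv> real (card (tri E i j))"
  shows "Phi E i j \<le> 2 / di + 2 / dj - 2 + 2 * t / dj + t / di"
proof -
  have "Phi E i j = - pos_part (1 - 1 / di - 1 / dj - t / dj)
        - pos_part (1 - 1 / di - 1 / dj - t / di) + t / dj"
    unfolding Phi_def di_def dj_def t_def Let_def ..
  also have "\<dots> \<le> - (1 - 1 / di - 1 / dj - t / dj) - (1 - 1 / di - 1 / dj - t / di) + t / dj"
    using pos_part_ge by (smt (verit))
  also have "\<dots> = 2 / di + 2 / dj - 2 + 2 * t / dj + t / di"
    by (simp add: field_simps)
  finally show ?thesis .
qed

lemma Phi_eq_0_if_deg_1:
  assumes "deg E i = 1" and "deg E j \<ge> 1" and "tri E i j = {}"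
  shows "Phi E i j = 0"
proof -
  have "1 - 1 - 1 / real (deg E j) \<le> 0" using assms(2) by simp
  then show ?thesis
    using assms(1,3) by (simp add: Phi_def Let_def pos_part_eq_0)
qed

theorem mainTheorem6:
  fixes E :: "'a \<Rightarrow> 'a \<Rightarrow> bool" and i j :: 'a
  assumes "simple_graph E" and "locally_finite E"
    and "E i j" and "deg E i \<le> deg E j"
  shows "Ric E i j \<ge> Phi E i j"
proof (cases "deg E i = 1")
  case True
  have "tri E i j = {}" using tri_empty_if_deg_1 assms(1,3) True .
  then have "Phi E i j = 0"
    using Phi_eq_0_if_deg_1 True assms(4) by simp
  moreover have "Ric E i j = 0"
    using True assms(4) by (simp add: Ric_def Let_def min_def)
  ultimately show ?thesis by simp
next
  case False
  define di dj where "di = real (deg E i)" and "dj = real (deg E j)"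
  have "deg E i \<ge> 1" using deg_ge_1_if_edge assms(2,3) .
  then have "min di dj = di" "max di dj = dj" "di \<noteq> 1" "di > 0"
    using False assms(4) by (auto simp: di_def dj_def)
  then have "Ric E i j \<ge> 2 / di + 2 / dj - 2 + 2 * real (card (tri E i j)) / dj
                          + real (card (tri E i j)) / di"
    using Ric_ge_triangle_part[of E i j] by (simp add: di_def dj_def)
  then show ?thesis
    using Phi_le_triangle_part[of E i j] by (simp add: di_def dj_def)
qed

end
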